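(* In Algorithm 1 (described in the context), every time a triplet $(\mathrm{dist},\mathrm{seed},v_0)$ is popped from $Q$ the following hold: (1) if $\mathrm{seed}\in\mathrm{NLV}(v_0,k)$ then $\mathrm{dist}=d_G(\mathrm{seed},v_0)$; (2) every pair $(s,v)\in\mathcal L\times V$ with $d_G(s,v)<\mathrm{dist}$ and $s\in\mathrm{NLV}(v,k)$ belongs to the visited set.
   Context: $d_G$ is the shortest-path distance in $G$; $\mathrm{NLV}(v,k)$ is the set of $k$ nearest labeled vertices to $v$ with respect to $d_G$. Algorithm 1: input an undirected graph $G=(V,E,w)$ with non-negative weights, a set $\mathcal L\subseteq V$ of labeled vertices, and an integer $k\ge1$. It maintains a min-priority queue $Q$ of pairs $(\mathrm{seed},v)\in\mathcal L\times V$ with priorities (a popped pair with priority $\mathrm{dist}$ is the triplet $(\mathrm{dist},\mathrm{seed},v)$), and for each $v\in V$ a list kNN$[v]$ (initially empty) and a set $S_v$ (initially empty); the visited set is $\{(s,v): s\in S_v\}$. Initially, for each $s\in\mathcal L$, $(s,s)$ is inserted with priority $0$. While $Q$ is nonempty: pop the pair $(\mathrm{seed},v_0)$ of minimum priority $\mathrm{dist}$; add $\mathrm{seed}$ to $S_{v_0}$; if kNN$[v_0]$ has fewer than $k$ entries, append $(\mathrm{dist},\mathrm{seed})$ to kNN$[v_0]$ and, for every neighbour $v$ of $v_0$ such that kNN$[v]$ has fewer than $k$ entries and $\mathrm{seed}\notin S_v$, perform decrease-or-insert of $(\mathrm{seed},v)$ with priority $\mathrm{dist}+w(v_0,v)$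 (if the pair is in $Q$ its priority is lowered to this value when smaller; otherwise it is inserted). *)

theory Defs
  imports "HOL-Library.Extended_Real"
begin

definition is_walk :: "'a set \<Rightarrow> ('a \<times> 'a) set \<Rightarrow> 'a list \<Rightarrow> bool" where
  "is_walk V E p \<longleftrightarrow> p \<noteq> [] \<and> set p \<subseteq> V \<and>
     (\<forall>i. Suc i < length p \<longrightarrow> (p ! i, p ! Suc i) \<in> E)"

definition walk_weight :: "('a \<Rightarrow> 'a \<Rightarrow> real) \<Rightarrow> 'a list \<Rightarrow> real" where
  "walk_weight w p = sum_list (map (\<lambda>(a, b). w a b) (zip p (tl p)))"

text \<open>Shortest-path distance d_G (infinite if no walk exists).\<close>
definition sp_dist :: "'a set \<Rightarrow> ('a \<times> 'a) set \<Rightarrow> ('a \<Rightarrow> 'a \<Rightarrow> real) \<Rightarrow> 'a \<Rightarrow> 'a \<Rightarrow> ereal" where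
  "sp_dist V E w u v =
     (INF p \<in> {p. is_walk V E p \<and> hd p = u \<and> last p = v}. ereal (walk_weight w p))"

text \<open>Ties are resolved strictly:
  s is among the k nearest iff at most k labeled vertices (s included) are at distance
  no larger than d_G(s,v). Without ties this is exactly the set of the k nearest.\<close>
definition NLV :: "'a set \<Rightarrow> ('a \<times> 'a) set \<Rightarrow> ('a \<Rightarrow> 'a \<Rightarrow> real) \<Rightarrow> 'a set \<Rightarrow> 'a \<Rightarrow> nat \<Rightarrow> 'a set" where
  "NLV V E w L v k =
     {s \<in> L. card {s' \<in> L. sp_dist V E w s' v \<le> sp_dist V E w s v} \<le> k}"

text \<open>State of Algorithm 1: priority queue Q (partial map from pairs (seed,v) to priorities),
  the lists kNN[v], and the sets S_v.\<close>
record 'a kstate =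
  Qu :: "('a \<times> 'a) \<Rightarrow> real option"
  kNN :: "'a \<Rightarrow> (real \<times> 'a) list"
  Sv :: "'a \<Rightarrow> 'a set"

definition init_state :: "'a set \<Rightarrow> 'a kstate" where
  "init_state L = \<lparr>Qu = (\<lambda>(s, v). if s \<in> L \<and> v = s then Some 0 else None),
                   kNN = (\<lambda>_. []), Sv = (\<lambda>_. {})\<rparr>"

definition can_pop :: "'a kstate \<Rightarrow> real \<Rightarrow> 'a \<Rightarrow> 'a \<Rightarrow> bool" where
  "can_pop st d seed v0 \<longleftrightarrow> Qu st (seed, v0) = Some d \<and>
     (\<forall>p d'. Qu st p = Some d' \<longrightarrow> d \<le> d')"

text \<open>One iteration of the while loop after popping (dist,seed,v0) = (d,seed,v0).
  The neighbour updates concern distinct keys (seed,v), so they are performed simultaneously.\<close>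
definition after_pop :: "('a \<times> 'a) set \<Rightarrow> ('a \<Rightarrow> 'a \<Rightarrow> real) \<Rightarrow> nat \<Rightarrow> 'a kstate \<Rightarrow>
    real \<Rightarrow> 'a \<Rightarrow> 'a \<Rightarrow> 'a kstate" where
  "after_pop E w k st d seed v0 =
     (let S' = (Sv st)(v0 := insert seed (Sv st v0));
          Q0 = (Qu st)((seed, v0) := None) in
      if length (kNN st v0) < k then
        (let K' = (kNN st)(v0 := kNN st v0 @ [(d, seed)]) in
         \<lparr>Qu = (\<lambda>(s, v). if s = seed \<and> (v0, v) \<in> E \<and> length (K' v) < k \<and> seed \<notin> S' v
                          then Some (case Q0 (s, v) of None \<Rightarrow> d + w v0 v
                                     | Some p \<Rightarrow> min p (d + w v0 v))
                          else Q0 (s, v)),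
          kNN = K', Sv = S'\<rparr>)
      else \<lparr>Qu = Q0, kNN = kNN st, Sv = S'\<rparr>)"

inductive reach :: "('a \<times> 'a) set \<Rightarrow> ('a \<Rightarrow> 'a \<Rightarrow> real) \<Rightarrow> 'a set \<Rightarrow> nat \<Rightarrow> 'a kstate \<Rightarrow> bool"
  for E w L k where
  reach_init: "reach E w L k (init_state L)"
| reach_step: "reach E w L k st \<Longrightarrow> can_pop st d seed v0 \<Longrightarrow>
                 reach E w L k (after_pop E w k st d seed v0)"

end

theory Submission
  imports Defs
begin

text \<open>
  Call a walk p from a labelled s to v a knn walk if at most k labelled vertices lie within
  distance weight(p) of v.  Prefixes of knn walks are knn walks, and if s \<in> NLV(v,k) then every
  walk from s to v lighter than all labelled distances to v above d(s,v) is a knn walk.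
  The loop maintains that a visited pair (s,v) carries an entry of kNN[v] no larger than the
  weight of any knn walk from s to v, and that an entry of kNN[x] has been relaxed along every
  edge (x,y) unless kNN[y] is already full with entries no larger.  Along a knn walk from s to an
  unvisited v, the first unvisited vertex is therefore queued for s with priority at most the
  weight of the walk: fullness of its list is ruled out by counting labels.  Since the popped
  priority is minimal, every pair (s,v) with s \<in> NLV(v,k) and d(s,v) below it has been visited,
  and the popped pair itself, being unvisited, has priority d(seed,v0).
\<close>

section \<open>Walks and shortest-path distance\<close>

lemma walk_weight_Nil [simp]: "walk_weight w [] = 0"
  by (simp add: walk_weight_def)

lemma walk_weight_singleton [simp]: "walk_weight w [a] = 0"
  by (simp add: walk_weight_def)

lemma walk_weight_Cons_Cons [simp]: "walk_weight w (a # b # p) = w a b + walk_weight w (b # p)"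
  by (simp add: walk_weight_def)

lemma is_walk_singleton [simp]: "is_walk V E [a] \<longleftrightarrow> a \<in> V"
  by (simp add: is_walk_def)

lemma is_walk_Cons_Cons [simp]:
  "is_walk V E (a # b # p) \<longleftrightarrow> a \<in> V \<and> (a, b) \<in> E \<and> is_walk V E (b # p)"
  unfolding is_walk_def
proof (intro iffI conjI allI impI; (elim conjE)?)
  fix i assume "\<forall>i. Suc i < length (a # b # p) \<longrightarrow> ((a # b # p) ! i, (a # b # p) ! Suc i) \<in> E"
    and "Suc i < length (b # p)"
  then show "((b # p) ! i, (b # p) ! Suc i) \<in> E" by force
next
  fix i assume "(a, b) \<in> E" "\<forall>i. Suc i < length (b # p) \<longrightarrow> ((b # p) ! i, (b # p) ! Suc i) \<in> E"
    and "Suc i < length (a # b # p)"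
  then show "((a # b # p) ! i, (a # b # p) ! Suc i) \<in> E" by (cases i) auto
qed force+

lemma walk_weight_append:
  "p \<noteq> [] \<Longrightarrow> last p = hd q \<Longrightarrow> walk_weight w (p @ tl q) = walk_weight w p + walk_weight w q"
proof (induction p rule: induct_list012)
  case (2 x)
  then show ?case by (cases q) auto
qed simp_all

lemma is_walk_append:
  "is_walk V E p \<Longrightarrow> is_walk V E q \<Longrightarrow> last p = hd q \<Longrightarrow> is_walk V E (p @ tl q)"
proof (induction p rule: induct_list012)
  case (2 x)
  then show ?case by (cases q) (auto simp: is_walk_def)
next
  case (3 x y zs)
  then show ?case by simp
qed (simp add: is_walk_def)

lemma is_walk_take: "is_walk V E p \<Longrightarrow> j < length p \<Longrightarrow> is_walk V E (take (Suc j) p)"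
  unfolding is_walk_def by (auto dest: in_set_takeD)

lemma is_walk_drop: "is_walk V E p \<Longrightarrow> j < length p \<Longrightarrow> is_walk V E (drop j p)"
  unfolding is_walk_def by (auto dest: in_set_dropD)

lemma last_take_Suc: "j < length p \<Longrightarrow> last (take (Suc j) p) = p ! j"
  by (simp add: take_Suc_conv_app_nth)

lemma walk_weight_take_drop:
  assumes "j < length p"
  shows "walk_weight w p = walk_weight w (take (Suc j) p) + walk_weight w (drop j p)"
proof -
  have "p = take (Suc j) p @ tl (drop j p)"
    by (metis append_take_drop_id drop_Suc tl_drop)
  also have "walk_weight w \<dots> = walk_weight w (take (Suc j) p) + walk_weight w (drop j p)"
    using assms by (intro walk_weight_append) (auto simp: last_take_Suc hd_drop_conv_nth)
  finally show ?thesis .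
qed

lemma walk_weight_take_Suc_Suc:
  "Suc i < length p \<Longrightarrow>
   walk_weight w (take (Suc (Suc i)) p) = walk_weight w (take (Suc i) p) + w (p ! i) (p ! Suc i)"
proof (induction p arbitrary: i rule: induct_list012)
  case (3 x y zs)
  then show ?case by (cases i; cases zs) auto
qed auto

lemma walk_weight_nonneg:
  "is_walk V E p \<Longrightarrow> (\<And>u v. (u, v) \<in> E \<Longrightarrow> 0 \<le> w u v) \<Longrightarrow> 0 \<le> walk_weight w p"
  by (induction p rule: induct_list012) auto

lemma walk_weight_take_le:
  assumes "is_walk V E p" "\<And>u v. (u, v) \<in> E \<Longrightarrow> 0 \<le> w u v" "j < length p"
  shows "walk_weight w (take (Suc j) p) \<le> walk_weight w p"
  using walk_weight_take_drop[OF assms(3), of w] walk_weight_nonneg[OF is_walk_drop[OF assms(1,3)] assms(2)]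
  by simp

lemma sp_dist_le_walk_weight:
  "is_walk V E p \<Longrightarrow> hd p = u \<Longrightarrow> last p = v \<Longrightarrow> sp_dist V E w u v \<le> ereal (walk_weight w p)"
  unfolding sp_dist_def by (rule INF_lower) auto

lemma sp_dist_le_sp_dist_plus_walk:
  assumes q: "is_walk V E q" "hd q = b" "last q = c"
  shows "sp_dist V E w a c \<le> sp_dist V E w a b + ereal (walk_weight w q)"
proof -
  have "sp_dist V E w a c - ereal (walk_weight w q) \<le> sp_dist V E w a b"
    unfolding sp_dist_def[of V E w a b]
  proof (rule INF_greatest)
    fix p assume "p \<in> {p. is_walk V E p \<and> hd p = a \<and> last p = b}"
    then have p: "is_walk V E p" "hd p = a" "last p = b" by auto
    have ne: "p \<noteq> []" "q \<noteq> []" using p q by (auto simp: is_walk_def)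
    have "last (p @ tl q) = c"
      using p q ne by (cases q) (auto simp: last_tl)
    then have "sp_dist V E w a c \<le> ereal (walk_weight w (p @ tl q))"
      using p q ne by (intro sp_dist_le_walk_weight is_walk_append) auto
    also have "\<dots> = ereal (walk_weight w p) + ereal (walk_weight w q)"
      using walk_weight_append[of p q w] p q ne by simp
    finally show "sp_dist V E w a c - ereal (walk_weight w q) \<le> ereal (walk_weight w p)"
      by (simp add: ereal_minus_le)
  qed
  then show ?thesis by (simp add: ereal_minus_le)
qed

lemma Sv_after_pop:
  "Sv (after_pop E w k st d seed v0) x = (if x = v0 then insert seed (Sv st x) else Sv st x)"
  by (simp add: after_pop_def Let_def)

lemma Sv_subset_after_pop: "Sv st x \<subseteq> Sv (after_pop E w k st d seed v0) x"
  by (auto simp: Sv_after_pop)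

lemma kNN_after_pop:
  "kNN (after_pop E w k st d seed v0) x =
     (if x = v0 \<and> length (kNN st v0) < k then kNN st x @ [(d, seed)] else kNN st x)"
  by (simp add: after_pop_def Let_def)

lemma set_kNN_after_pop_cases:
  assumes "(d', s') \<in> set (kNN (after_pop E w k st d seed v0) x)"
  shows "(d', s') \<in> set (kNN st x) \<or> (x = v0 \<and> d' = d \<and> s' = seed \<and> length (kNN st v0) < k)"
  using assms by (auto simp: kNN_after_pop split: if_splits)

lemma Qu_after_pop:
  "Qu (after_pop E w k st d seed v0) (s, y) =
    (if length (kNN st v0) < k \<and> s = seed \<and> (v0, y) \<in> E
        \<and> length (kNN (after_pop E w k st d seed v0) y) < k
        \<and> seed \<notin> Sv (after_pop E w k st d seed v0) y
     then Some (case ((Qu st)((seed, v0) := None)) (s, y) of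
                  None \<Rightarrow> d + w v0 y
                | Some p \<Rightarrow> min p (d + w v0 y))
     else ((Qu st)((seed, v0) := None)) (s, y))"
  by (simp add: after_pop_def Let_def)

lemma Qu_after_pop_other:
  assumes "Qu st (s, y) = Some q" "(s, y) \<noteq> (seed, v0)"
  shows "\<exists>q'\<le>q. Qu (after_pop E w k st d seed v0) (s, y) = Some q'"
  using assms by (auto simp: Qu_after_pop simp del: fun_upd_apply split: option.split)
    (auto simp: fun_upd_apply)

lemma Qu_after_pop_relaxed:
  assumes "length (kNN st v0) < k" "(v0, y) \<in> E"
    "seed \<notin> Sv (after_pop E w k st d seed v0) y"
    "length (kNN (after_pop E w k st d seed v0) y) < k"
  shows "\<exists>q\<le>d + w v0 y. Qu (after_pop E w k st d seed v0) (seed, y) = Some q"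
  using assms by (auto simp: Qu_after_pop split: option.split)

lemma Qu_after_pop_SomeD:
  assumes "Qu (after_pop E w k st d seed v0) (s, y) = Some q"
  shows "((s, y) \<noteq> (seed, v0) \<and> Qu st (s, y) = Some q) \<or>
     (s = seed \<and> (v0, y) \<in> E \<and> seed \<notin> Sv (after_pop E w k st d seed v0) y \<and>
       (q = d + w v0 y \<or> (\<exists>q0. Qu st (s, y) = Some q0 \<and> q = min q0 (d + w v0 y))))"
  using assms by (auto simp: Qu_after_pop split: if_splits option.splits)

section \<open>Knn walks\<close>

locale knn_search =
  fixes V :: "'a set" and E :: "('a \<times> 'a) set" and w :: "'a \<Rightarrow> 'a \<Rightarrow> real"
    and L :: "'a set" and k :: nat
  assumes finite_V: "finite V" and E_subset: "E \<subseteq> V \<times> V"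
    and weight_nonneg: "\<And>u v. (u, v) \<in> E \<Longrightarrow> 0 \<le> w u v" and L_subset: "L \<subseteq> V"
begin

abbreviation D :: "'a \<Rightarrow> 'a \<Rightarrow> ereal" where "D \<equiv> sp_dist V E w"

lemma finite_L: "finite L"
  using finite_V L_subset finite_subset by blast

text \<open>p witnesses that s would lie in NLV(v,k) if weight(p) were its distance to v.\<close>

definition knn_walk :: "'a \<Rightarrow> 'a \<Rightarrow> 'a list \<Rightarrow> bool" where
  "knn_walk s v p \<longleftrightarrow> s \<in> L \<and> is_walk V E p \<and> hd p = s \<and> last p = v \<and>
     card {s'\<in>L. D s' v \<le> ereal (walk_weight w p)} \<le> k"

lemma knn_walk_take:
  assumes "knn_walk s v p" "j < length p"
  shows "knn_walk s (p ! j) (take (Suc j) p)"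
proof -
  have p: "s \<in> L" "is_walk V E p" "hd p = s" "last p = v"
    and card_le: "card {s'\<in>L. D s' v \<le> ereal (walk_weight w p)} \<le> k"
    using assms(1) by (auto simp: knn_walk_def)
  have sub: "{s'\<in>L. D s' (p ! j) \<le> ereal (walk_weight w (take (Suc j) p))}
        \<subseteq> {s'\<in>L. D s' v \<le> ereal (walk_weight w p)}"
  proof safe
    fix s' assume "s' \<in> L" and close: "D s' (p ! j) \<le> ereal (walk_weight w (take (Suc j) p))"
    have "D s' v \<le> D s' (p ! j) + ereal (walk_weight w (drop j p))"
      using is_walk_drop[OF p(2) assms(2)] assms(2) p
      by (intro sp_dist_le_sp_dist_plus_walk) (auto simp: hd_drop_conv_nth)
    also have "\<dots> \<le> ereal (walk_weight w (take (Suc j) p)) + ereal (walk_weight w (drop j p))"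
      using close by (rule add_right_mono)
    also have "\<dots> = ereal (walk_weight w p)"
      using walk_weight_take_drop[OF assms(2)] by simp
    finally show "D s' v \<le> ereal (walk_weight w p)" .
  qed
  have "card {s'\<in>L. D s' (p ! j) \<le> ereal (walk_weight w (take (Suc j) p))}
        \<le> card {s'\<in>L. D s' v \<le> ereal (walk_weight w p)}"
    by (rule card_mono) (use finite_L sub in auto)
  then have "card {s'\<in>L. D s' (p ! j) \<le> ereal (walk_weight w (take (Suc j) p))} \<le> k"
    using card_le by linarith
  then show ?thesis
    using p assms(2) is_walk_take[OF p(2) assms(2)] last_take_Suc[OF assms(2)]
    by (auto simp: knn_walk_def)
qed

lemma length_less_if_close_label_missing:
  assumes "distinct (map snd xs)"
    and "\<And>d' s'. (d', s') \<in> set xs \<Longrightarrow> s' \<in> L \<and> D s' z \<le> B \<and> s' \<noteq> s"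
    and "s \<in> L" "D s z \<le> B" "card {s'\<in>L. D s' z \<le> B} \<le> k"
  shows "length xs < k"
proof -
  have "insert s (snd ` set xs) \<subseteq> {s'\<in>L. D s' z \<le> B}"
    using assms(2-4) by auto
  then have "card (insert s (snd ` set xs)) \<le> card {s'\<in>L. D s' z \<le> B}"
    by (rule card_mono[rotated]) (use finite_L in auto)
  then have "card (insert s (snd ` set xs)) \<le> k"
    using assms(5) by linarith
  moreover have "s \<notin> snd ` set xs" using assms(2) by force
  ultimately show ?thesis
    using distinct_card[OF assms(1)] by simp
qed

section \<open>Invariants of the loop\<close>

definition queue_sound :: "'a kstate \<Rightarrow> bool" where
  "queue_sound st \<longleftrightarrow> (\<forall>s v q. Qu st (s, v) = Some q \<longrightarrow>
     s \<in> L \<and> v \<in> V \<and> D s v \<le> ereal q \<and> s \<notin> Sv st v)"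

definition sources_pending :: "'a kstate \<Rightarrow> bool" where
  "sources_pending st \<longleftrightarrow> (\<forall>s\<in>L. s \<in> Sv st s \<or> (\<exists>q\<le>0. Qu st (s, s) = Some q))"

definition knn_sound :: "'a kstate \<Rightarrow> bool" where
  "knn_sound st \<longleftrightarrow> (\<forall>x d s. (d, s) \<in> set (kNN st x) \<longrightarrow>
     s \<in> L \<and> D s x \<le> ereal d \<and> s \<in> Sv st x)"

definition knn_distinct :: "'a kstate \<Rightarrow> bool" where
  "knn_distinct st \<longleftrightarrow> (\<forall>x. distinct (map snd (kNN st x)))"

definition knn_le_queue :: "'a kstate \<Rightarrow> bool" where
  "knn_le_queue st \<longleftrightarrow> (\<forall>x d s pq q. (d, s) \<in> set (kNN st x) \<longrightarrow> Qu st pq = Some q \<longrightarrow> d \<le> q)"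

text \<open>A full list kNN[y] of entries at most d is the only excuse for the algorithm not to
  relax the entry (d,s) of kNN[x] along the edge (x,y).\<close>

definition relaxed_edge :: "'a kstate \<Rightarrow> 'a \<Rightarrow> 'a \<Rightarrow> real \<Rightarrow> 'a \<Rightarrow> bool" where
  "relaxed_edge st x y d s \<longleftrightarrow> s \<in> Sv st y \<or> (\<exists>q\<le>d + w x y. Qu st (s, y) = Some q) \<or>
     k \<le> length (filter (\<lambda>e. fst e \<le> d) (kNN st y))"

definition knn_relaxed :: "'a kstate \<Rightarrow> bool" where
  "knn_relaxed st \<longleftrightarrow>
     (\<forall>x y d s. (d, s) \<in> set (kNN st x) \<longrightarrow> (x, y) \<in> E \<longrightarrow> relaxed_edge st x y d s)"

definition knn_complete :: "'a kstate \<Rightarrow> bool" where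
  "knn_complete st \<longleftrightarrow> (\<forall>s v p. knn_walk s v p \<longrightarrow> s \<in> Sv st v \<longrightarrow>
     (\<exists>d\<le>walk_weight w p. (d, s) \<in> set (kNN st v)))"

definition alg_inv :: "'a kstate \<Rightarrow> bool" where
  "alg_inv st \<longleftrightarrow> queue_sound st \<and> sources_pending st \<and> knn_sound st \<and> knn_distinct st \<and>
     knn_le_queue st \<and> knn_relaxed st \<and> knn_complete st"

lemma queued_after_visited_prefix:
  assumes inv: "alg_inv st" and p: "knn_walk s v p" "Suc i < length p"
    and visited: "s \<in> Sv st (p ! i)" and unvisited: "s \<notin> Sv st (p ! Suc i)"
  shows "\<exists>q\<le>walk_weight w (take (Suc (Suc i)) p). Qu st (s, p ! Suc i) = Some q"
proof -
  let ?y = "p ! Suc i"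
  have walk: "is_walk V E p" using p(1) by (simp add: knn_walk_def)
  have edge: "(p ! i, ?y) \<in> E" using walk p(2) by (simp add: is_walk_def)
  have weight: "walk_weight w (take (Suc (Suc i)) p) = walk_weight w (take (Suc i) p) + w (p ! i) ?y"
    using walk_weight_take_Suc_Suc[OF p(2)] .
  have "knn_walk s (p ! i) (take (Suc i) p)"
    using knn_walk_take[OF p(1)] p(2) by simp
  then obtain d where d: "d \<le> walk_weight w (take (Suc i) p)" "(d, s) \<in> set (kNN st (p ! i))"
    using inv visited unfolding alg_inv_def knn_complete_def by blast
  let ?F = "filter (\<lambda>e. fst e \<le> d) (kNN st ?y)"
  \<comment> \<open>kNN[y] is not full up to d: its entries are labels other than s, close enough to
     y that together with s they number at most k\<close>
  have "length ?F < k"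
  proof (rule length_less_if_close_label_missing)
    show "distinct (map snd ?F)"
      using inv by (auto simp: alg_inv_def knn_distinct_def distinct_map_filter)
  next
    fix d' s' assume "(d', s') \<in> set ?F"
    then have "s' \<in> L" "D s' ?y \<le> ereal d'" "s' \<in> Sv st ?y" "d' \<le> d"
      using inv by (auto simp: alg_inv_def knn_sound_def)
    then show "s' \<in> L \<and> D s' ?y \<le> ereal (walk_weight w (take (Suc (Suc i)) p)) \<and> s' \<noteq> s"
      using unvisited d(1) weight weight_nonneg[OF edge] by (auto intro: order_trans)
  next
    show "s \<in> L" "D s ?y \<le> ereal (walk_weight w (take (Suc (Suc i)) p))"
      "card {s'\<in>L. D s' ?y \<le> ereal (walk_weight w (take (Suc (Suc i)) p))} \<le> k"
      using knn_walk_take[OF p] by (auto simp: knn_walk_def intro: sp_dist_le_walk_weight)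
  qed
  then have "\<exists>q\<le>d + w (p ! i) ?y. Qu st (s, ?y) = Some q"
    using inv d(2) edge unvisited unfolding alg_inv_def knn_relaxed_def relaxed_edge_def
    by fastforce
  then show ?thesis using d(1) weight by fastforce
qed

lemma visited_or_queued_along_knn_walk:
  assumes inv: "alg_inv st" and p: "knn_walk s v p" "j < length p"
  shows "s \<in> Sv st (p ! j) \<or> (\<exists>i\<le>j. \<exists>q\<le>walk_weight w (take (Suc i) p). Qu st (s, p ! i) = Some q)"
  using p(2)
proof (induction j)
  case 0
  obtain p' where p': "p = s # p'" and "s \<in> L"
    using p(1) by (cases p) (auto simp: knn_walk_def is_walk_def)
  show ?case
  proof (cases "s \<in> Sv st s")
    case False
    then obtain q where "q \<le> 0" "Qu st (s, s) = Some q"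
      using inv \<open>s \<in> L\<close> unfolding alg_inv_def sources_pending_def by blast
    then show ?thesis using p' by (intro disjI2 exI[of _ 0]) auto
  qed (simp add: p')
next
  case (Suc j)
  have "s \<in> Sv st (p ! j) \<or> (\<exists>i\<le>j. \<exists>q\<le>walk_weight w (take (Suc i) p). Qu st (s, p ! i) = Some q)"
    using Suc by simp
  then show ?case
  proof
    assume visited: "s \<in> Sv st (p ! j)"
    show ?case
    proof (cases "s \<in> Sv st (p ! Suc j)")
      case False
      then show ?thesis
        using queued_after_visited_prefix[OF inv p(1) Suc.prems visited] by blast
    qed simp
  qed (use le_SucI in blast)
qed

lemma queued_below_knn_walk:
  assumes inv: "alg_inv st" and p: "knn_walk s v p" and unvisited: "s \<notin> Sv st v"
  shows "\<exists>y. \<exists>q\<le>walk_weight w p. Qu st (s, y) = Some q"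
proof -
  have walk: "is_walk V E p" "last p = v" using p by (auto simp: knn_walk_def)
  then have last: "length p - 1 < length p" "p ! (length p - 1) = v"
    by (auto simp: is_walk_def last_conv_nth)
  then obtain i q where i: "i \<le> length p - 1" and q: "q \<le> walk_weight w (take (Suc i) p)"
    and queued: "Qu st (s, p ! i) = Some q"
    using visited_or_queued_along_knn_walk[OF inv p last(1)] unvisited by auto
  have "walk_weight w (take (Suc i) p) \<le> walk_weight w p"
    using walk_weight_take_le[OF walk(1) weight_nonneg] last(1) i by simp
  with q have "q \<le> walk_weight w p" by linarith
  with queued show ?thesis by blast
qed

lemma alg_inv_init_state: "alg_inv (init_state L)"
proof -
  have "D s s \<le> ereal 0" if "s \<in> L" for s
    using that L_subset sp_dist_le_walk_weight[of V E "[s]" s s w] by auto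
  then have "queue_sound (init_state L)"
    using L_subset by (auto simp: queue_sound_def init_state_def split: if_splits)
  then show ?thesis
    by (auto simp: alg_inv_def sources_pending_def knn_sound_def knn_distinct_def knn_le_queue_def
        knn_relaxed_def knn_complete_def init_state_def)
qed

context
  fixes st d seed v0
  assumes inv: "alg_inv st" and pop: "can_pop st d seed v0"
begin

abbreviation next_st :: "'a kstate" where "next_st \<equiv> after_pop E w k st d seed v0"

lemma popped_queued: "Qu st (seed, v0) = Some d"
  using pop by (simp add: can_pop_def)

lemma popped_le_queued: "Qu st pq = Some q \<Longrightarrow> d \<le> q"
  using pop unfolding can_pop_def by blast

lemma popped_sound: "seed \<in> L" "v0 \<in> V" "D seed v0 \<le> ereal d" "seed \<notin> Sv st v0"
  using inv popped_queued by (auto simp: alg_inv_def queue_sound_def)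

lemma knn_le_popped: "(d', s') \<in> set (kNN st x) \<Longrightarrow> d' \<le> d"
  using inv popped_queued unfolding alg_inv_def knn_le_queue_def by blast

lemma popped_le_queued_after_pop: "Qu next_st (s, y) = Some q \<Longrightarrow> d \<le> q"
  using Qu_after_pop_SomeD popped_le_queued weight_nonneg by fastforce

lemma sp_dist_popped_edge: "(v0, y) \<in> E \<Longrightarrow> D seed y \<le> ereal (d + w v0 y)"
proof -
  assume edge: "(v0, y) \<in> E"
  then have "D seed y \<le> D seed v0 + ereal (walk_weight w [v0, y])"
    using E_subset by (intro sp_dist_le_sp_dist_plus_walk) auto
  also have "\<dots> = D seed v0 + ereal (w v0 y)"
    by simp
  also have "\<dots> \<le> ereal d + ereal (w v0 y)"
    by (rule add_right_mono[OF popped_sound(3)])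
  finally show ?thesis by simp
qed

lemma queue_sound_after_pop: "queue_sound next_st"
  unfolding queue_sound_def
proof (intro allI impI)
  fix s v q assume "Qu next_st (s, v) = Some q"
  from Qu_after_pop_SomeD[OF this]
  show "s \<in> L \<and> v \<in> V \<and> D s v \<le> ereal q \<and> s \<notin> Sv next_st v"
  proof (elim disjE)
    assume "(s, v) \<noteq> (seed, v0) \<and> Qu st (s, v) = Some q"
    then show ?thesis using inv by (auto simp: alg_inv_def queue_sound_def Sv_after_pop)
  next
    assume "s = seed \<and> (v0, v) \<in> E \<and> seed \<notin> Sv next_st v \<and>
      (q = d + w v0 v \<or> (\<exists>q0. Qu st (s, v) = Some q0 \<and> q = min q0 (d + w v0 v)))"
    then have s: "s = seed" and edge: "(v0, v) \<in> E" and "seed \<notin> Sv next_st v"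
      and q: "q = d + w v0 v \<or> (\<exists>q0. Qu st (s, v) = Some q0 \<and> q = min q0 (d + w v0 v))"
      by auto
    have "D s v \<le> ereal q0" if "Qu st (s, v) = Some q0" for q0
      using inv that by (auto simp: alg_inv_def queue_sound_def)
    then have "D s v \<le> ereal q"
      using q sp_dist_popped_edge[OF edge] s by (auto simp: min_def)
    then show ?thesis
      using \<open>seed \<notin> Sv next_st v\<close> s popped_sound(1) edge E_subset by auto
  qed
qed

lemma sources_pending_after_pop: "sources_pending next_st"
  unfolding sources_pending_def
proof
  fix s assume "s \<in> L"
  show "s \<in> Sv next_st s \<or> (\<exists>q\<le>0. Qu next_st (s, s) = Some q)"
  proof (cases "s \<in> Sv st s \<or> (s, s) = (seed, v0)")
    case True
    then show ?thesis using Sv_subset_after_pop by (auto simp: Sv_after_pop)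
  next
    case False
    then obtain q where "q \<le> 0" "Qu st (s, s) = Some q"
      using inv \<open>s \<in> L\<close> unfolding alg_inv_def sources_pending_def by blast
    moreover from this obtain q' where "q' \<le> q" "Qu next_st (s, s) = Some q'"
      using Qu_after_pop_other[of st s s q seed v0] False by blast
    ultimately show ?thesis by auto
  qed
qed

lemma knn_sound_after_pop: "knn_sound next_st"
  using inv set_kNN_after_pop_cases Sv_subset_after_pop popped_sound
  unfolding alg_inv_def knn_sound_def by (fastforce simp: Sv_after_pop)

lemma knn_distinct_after_pop: "knn_distinct next_st"
proof -
  have "seed \<notin> snd ` set (kNN st v0)"
    using inv popped_sound(4) unfolding alg_inv_def knn_sound_def by force
  then show ?thesis
    using inv by (auto simp: alg_inv_def knn_distinct_def kNN_after_pop)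
qed

lemma knn_le_queue_after_pop: "knn_le_queue next_st"
  unfolding knn_le_queue_def
proof (intro allI impI)
  fix x d' s' pq q
  assume entry: "(d', s') \<in> set (kNN next_st x)" and queued: "Qu next_st pq = Some q"
  have "d' \<le> d"
    using set_kNN_after_pop_cases[OF entry] knn_le_popped by auto
  moreover have "d \<le> q"
    using queued popped_le_queued_after_pop by (cases pq) auto
  ultimately show "d' \<le> q" by simp
qed

lemma relaxed_edge_after_pop:
  assumes "relaxed_edge st x y d' s"
  shows "relaxed_edge next_st x y d' s"
proof -
  consider "s \<in> Sv st y" | q where "q \<le> d' + w x y" "Qu st (s, y) = Some q"
    | "k \<le> length (filter (\<lambda>e. fst e \<le> d') (kNN st y))"
    using assms unfolding relaxed_edge_def by blast
  then show ?thesis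
  proof cases
    case 1
    then have "s \<in> Sv next_st y" by (rule subsetD[OF Sv_subset_after_pop])
    then show ?thesis by (simp add: relaxed_edge_def)
  next
    case (2 q)
    show ?thesis
    proof (cases "(s, y) = (seed, v0)")
      case False
      then obtain q' where "q' \<le> q" "Qu next_st (s, y) = Some q'"
        using Qu_after_pop_other[OF 2(2), of seed v0] by blast
      with 2(1) show ?thesis by (auto simp: relaxed_edge_def)
    qed (simp add: relaxed_edge_def Sv_after_pop)
  next
    case 3
    then show ?thesis by (auto simp: relaxed_edge_def kNN_after_pop)
  qed
qed

lemma relaxed_edge_popped:
  assumes "length (kNN st v0) < k" "(v0, y) \<in> E"
  shows "relaxed_edge next_st v0 y d seed"
proof (cases "seed \<in> Sv next_st y")
  case False
  show ?thesis
  proof (cases "length (kNN next_st y) < k")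
    case True
    then show ?thesis
      using Qu_after_pop_relaxed[OF assms False] by (simp add: relaxed_edge_def)
  next
    case full: False
    have "d' \<le> d" if "(d', s') \<in> set (kNN next_st y)" for d' s'
      using set_kNN_after_pop_cases[OF that] knn_le_popped by blast
    then have "filter (\<lambda>e. fst e \<le> d) (kNN next_st y) = kNN next_st y"
      by (auto simp: filter_id_conv)
    with full show ?thesis by (simp add: relaxed_edge_def)
  qed
qed (simp add: relaxed_edge_def)

lemma knn_relaxed_after_pop: "knn_relaxed next_st"
  using inv set_kNN_after_pop_cases relaxed_edge_after_pop relaxed_edge_popped
  unfolding alg_inv_def knn_relaxed_def by metis

lemma knn_complete_after_pop: "knn_complete next_st"
  unfolding knn_complete_def
proof (intro allI impI)
  fix s v p assume p: "knn_walk s v p" and "s \<in> Sv next_st v"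
  show "\<exists>d'\<le>walk_weight w p. (d', s) \<in> set (kNN next_st v)"
  proof (cases "s \<in> Sv st v")
    case True
    then show ?thesis
      using inv p set_kNN_after_pop_cases unfolding alg_inv_def knn_complete_def
      by (fastforce simp: kNN_after_pop)
  next
    case False
    with \<open>s \<in> Sv next_st v\<close> have popped: "s = seed" "v = v0"
      by (auto simp: Sv_after_pop split: if_splits)
    have "d \<le> walk_weight w p"
      using queued_below_knn_walk[OF inv p False] popped_le_queued by force
    have "length (kNN st v0) < k"
    proof (rule length_less_if_close_label_missing)
      show "distinct (map snd (kNN st v0))"
        using inv by (simp add: alg_inv_def knn_distinct_def)
    next
      fix d' s' assume "(d', s') \<in> set (kNN st v0)"
      then show "s' \<in> L \<and> D s' v0 \<le> ereal (walk_weight w p) \<and> s' \<noteq> seed"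
        using inv knn_le_popped \<open>d \<le> walk_weight w p\<close> popped_sound(4)
        unfolding alg_inv_def knn_sound_def by (fastforce intro: order_trans)
    qed (use p popped in \<open>auto simp: knn_walk_def intro: sp_dist_le_walk_weight\<close>)
    then show ?thesis
      using \<open>d \<le> walk_weight w p\<close> popped by (auto simp: kNN_after_pop)
  qed
qed

lemma alg_inv_after_pop: "alg_inv next_st"
  using queue_sound_after_pop sources_pending_after_pop knn_sound_after_pop
    knn_distinct_after_pop knn_le_queue_after_pop knn_relaxed_after_pop knn_complete_after_pop
  by (simp add: alg_inv_def)

end

lemma alg_inv_if_reach: "reach E w L k st \<Longrightarrow> alg_inv st"
  by (induction rule: reach.induct) (auto intro: alg_inv_init_state alg_inv_after_pop)

lemma knn_walk_lighter_than:
  assumes nlv: "s \<in> NLV V E w L v k" and closer: "D s v < ereal b"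
  shows "\<exists>p. knn_walk s v p \<and> walk_weight w p < b"
proof -
  \<comment> \<open>a walk lighter than every labelled distance above D s v is a knn walk\<close>
  define T where "T = {t \<in> (\<lambda>s'. D s' v) ` L. D s v < t}"
  define g where "g = Min (insert (ereal b) T)"
  have "finite T" unfolding T_def using finite_L by auto
  then have "D s v < g" "g \<le> ereal b"
    using closer by (auto simp: g_def T_def)
  then obtain p where p: "is_walk V E p" "hd p = s" "last p = v" "ereal (walk_weight w p) < g"
    unfolding sp_dist_def[of V E w s v] by (auto simp: INF_less_iff)
  have "{s'\<in>L. D s' v \<le> ereal (walk_weight w p)} \<subseteq> {s'\<in>L. D s' v \<le> D s v}"
  proof safe
    fix s' assume s': "s' \<in> L" "D s' v \<le> ereal (walk_weight w p)"
    show "D s' v \<le> D s v"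
    proof (rule ccontr)
      assume "\<not> D s' v \<le> D s v"
      then have "D s' v \<in> T"
        using s'(1) by (auto simp: T_def)
      then have "g \<le> D s' v"
        using \<open>finite T\<close> by (simp add: g_def)
      with s'(2) p(4) show False by simp
    qed
  qed
  then have "card {s'\<in>L. D s' v \<le> ereal (walk_weight w p)} \<le> card {s'\<in>L. D s' v \<le> D s v}"
    by (rule card_mono[rotated]) (use finite_L in auto)
  also have "\<dots> \<le> k" using nlv by (simp add: NLV_def)
  finally have "knn_walk s v p"
    using nlv p by (simp add: knn_walk_def NLV_def)
  moreover have "ereal (walk_weight w p) < ereal b"
    using p(4) \<open>g \<le> ereal b\<close> by (rule less_le_trans)
  ultimately show ?thesis by auto
qed

lemma visited_if_closer_than_popped:
  assumes "alg_inv st" "can_pop st dst seed v0"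
    and "s \<in> NLV V E w L v k" "D s v < ereal dst"
  shows "s \<in> Sv st v"
proof (rule ccontr)
  assume "s \<notin> Sv st v"
  obtain p where p: "knn_walk s v p" "walk_weight w p < dst"
    using knn_walk_lighter_than assms(3,4) by blast
  then obtain y q where "q \<le> walk_weight w p" "Qu st (s, y) = Some q"
    using queued_below_knn_walk[OF assms(1)] \<open>s \<notin> Sv st v\<close> by blast
  then show False
    using assms(2) p(2) unfolding can_pop_def by force
qed

lemma popped_dist_eq_sp_dist:
  assumes "alg_inv st" "can_pop st dst seed v0" "seed \<in> NLV V E w L v0 k"
  shows "ereal dst = D seed v0"
proof -
  have "D seed v0 \<le> ereal dst" "seed \<notin> Sv st v0"
    using popped_sound[OF assms(1,2)] by auto
  then show ?thesis
    using visited_if_closer_than_popped[OF assms] by fastforce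
qed

end

theorem lemmaB4:
  fixes V :: "'a set" and E :: "('a \<times> 'a) set" and w :: "'a \<Rightarrow> 'a \<Rightarrow> real"
    and L :: "'a set" and k :: nat and dst :: real and st :: "'a kstate"
  assumes "finite V"
    and "E \<subseteq> V \<times> V"
    and "\<And>u v. (u, v) \<in> E \<Longrightarrow> (v, u) \<in> E"
    and "\<And>u v. (u, v) \<in> E \<Longrightarrow> w u v = w v u"
    and "\<And>u v. (u, v) \<in> E \<Longrightarrow> 0 \<le> w u v"
    and "L \<subseteq> V"
    and "1 \<le> k"
    and "reach E w L k st"
    and "can_pop st dst seed v0"
  shows "(seed \<in> NLV V E w L v0 k \<longrightarrow> ereal dst = sp_dist V E w seed v0) \<and>
         (\<forall>s\<in>L. \<forall>v\<in>V. sp_dist V E w s v < ereal dst \<and> s \<in> NLV V E w L v k \<longrightarrow> s \<in> Sv st v)"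
proof -
  interpret knn_search V E w L k
    using assms(1,2,5,6) by unfold_locales
  have inv: "alg_inv st"
    using assms(8) by (rule alg_inv_if_reach)
  show ?thesis
    using popped_dist_eq_sp_dist[OF inv assms(9)] visited_if_closer_than_popped[OF inv assms(9)]
    by blast
qed

end
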